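(* Let $S$ and $R$ be finite sequences of propositional formulae and $F$ a propositional formula. If $S \equiv S \cdot [F]$ then $S \cdot R \equiv S \cdot [F] \cdot R$.
   Context: Models are truth assignments. For a formula $G$: $I \leq_G J$ iff $I \models G$ or $J \not\models G$. For a sequence $S=[S_1,\ldots,S_m]$: $I \leq_S J$ iff either $S=[]$, or ($I \leq_{S_1} J$ and (either $J \not\leq_{S_1} I$ or $I \leq_{S'} J$)), where $S'=[S_2,\ldots,S_m]$. For sequences, $S\equiv R$ means $I \leq_S J$ and $I\leq_R J$ coincide for all pairs of models $I,J$. $\cdot$ denotes concatenation of sequences. *)

theory Defs
  imports Main
begin

datatype 'v form =
    Var 'v
  | Bot
  | Top
  | Neg "'v form"
  | Conj "'v form" "'v form"
  | Disj "'v form" "'v form"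
  | Imp "'v form" "'v form"
  | Iff "'v form" "'v form"

type_synonym 'v model = "'v \<Rightarrow> bool"

fun sat :: "'v model \<Rightarrow> 'v form \<Rightarrow> bool" where
  "sat I (Var x) = I x"
| "sat I Bot = False"
| "sat I Top = True"
| "sat I (Neg f) = (\<not> sat I f)"
| "sat I (Conj f g) = (sat I f \<and> sat I g)"
| "sat I (Disj f g) = (sat I f \<or> sat I g)"
| "sat I (Imp f g) = (sat I f \<longrightarrow> sat I g)"
| "sat I (Iff f g) = (sat I f \<longleftrightarrow> sat I g)"

definition le_form :: "'v form \<Rightarrow> 'v model \<Rightarrow> 'v model \<Rightarrow> bool" where
  "le_form G I J \<longleftrightarrow> sat I G \<or> \<not> sat J G"

text \<open>Lexicographic order induced by a sequence of formulae.\<close>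
fun le_seq :: "'v form list \<Rightarrow> 'v model \<Rightarrow> 'v model \<Rightarrow> bool" where
  "le_seq [] I J = True"
| "le_seq (G # S') I J =
     (le_form G I J \<and> (\<not> le_form G J I \<or> le_seq S' I J))"

definition seq_equiv :: "'v form list \<Rightarrow> 'v form list \<Rightarrow> bool" where
  "seq_equiv S R \<longleftrightarrow> (\<forall>I J. le_seq S I J = le_seq R I J)"

end

theory Submission
  imports Defs
begin

lemma le_seq_append:
  "le_seq (S @ R) I J \<longleftrightarrow> le_seq S I J \<and> (\<not> le_seq S J I \<or> le_seq R I J)"
  by (induction S) (auto simp: le_form_def)

lemma seq_equiv_append_right:
  assumes "seq_equiv S S'"
  shows "seq_equiv (S @ R) (S' @ R)"
  using assms by (simp add: seq_equiv_def le_seq_append)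

theorem corollary4:
  fixes S R :: "'v form list" and F :: "'v form"
  assumes "seq_equiv S (S @ [F])"
  shows "seq_equiv (S @ R) (S @ [F] @ R)"
  using seq_equiv_append_right[OF assms, of R] by simp

end
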